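(* Let $k\ge 1$ and let $F$ be a partially colored forest. If Alice can win the $k$-Modified Coloring Game on $\mathcal{R}(F)$, then she can win the $k$-coloring game on $F$.
   Context: All graphs are finite. A partial coloring of a graph assigns to some vertices colors from a fixed set $C$ of $k$ colors so that adjacent colored vertices receive different colors. A color $\alpha\in C$ is legal for an uncolored vertex $v$ if no neighbor of $v$ is colored $\alpha$. The $k$-coloring game on a (partially colored) graph $G$: Alice and Bob alternate turns, Alice first, each turn coloring an uncolored vertex with a legal color from $C$. If at any point some uncolored vertex has no legal color, Bob wins; if every vertex becomes colored, Alice wins. The $k$-Modified Coloring Game ($k$-MCG) is the same except that Bob plays first and Bob may choose to pass on any turn. For a partially colored forest $F$, a trunk of $F$ is a maximal connected subgraph $R$ of $F$ such that every colored vertex of $R$ is a leaf of $R$ (so each uncolored vertex lies in exactly one trunk, and a colored vertex of degree $d$ lies in exactly $d$ trunks). $\mathcal{R}(F)$ denotes the partially colored forest that is the disjoint union of all trunks of $F$ (a colored vertex lying in several trunks appears as a separate copy, with its color, in each of them). *)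

theory Defs
  imports Main
begin

text \<open>A partial coloring is c :: 'v => nat option; None means
uncolored. The color set C of k colors is {0..<k}.\<close>

definition simple_graph :: "'v set \<Rightarrow> ('v \<Rightarrow> 'v \<Rightarrow> bool) \<Rightarrow> bool" where
  "simple_graph V E \<longleftrightarrow> finite V \<and> (\<forall>u v. E u v \<longrightarrow> u \<in> V \<and> v \<in> V)
     \<and> (\<forall>u v. E u v \<longrightarrow> E v u) \<and> (\<forall>v. \<not> E v v)"

definition forest :: "'v set \<Rightarrow> ('v \<Rightarrow> 'v \<Rightarrow> bool) \<Rightarrow> bool" where
  "forest V E \<longleftrightarrow> simple_graph V E \<and>
     \<not> (\<exists>xs. length xs \<ge> 3 \<and> distinct xs \<and> set xs \<subseteq> V
          \<and> (\<forall>i. Suc i < length xs \<longrightarrow> E (xs ! i) (xs ! Suc i)) \<and> E (last xs) (hd xs))"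

definition partial_coloring :: "'v set \<Rightarrow> ('v \<Rightarrow> 'v \<Rightarrow> bool) \<Rightarrow> nat \<Rightarrow> ('v \<Rightarrow> nat option) \<Rightarrow> bool" where
  "partial_coloring V E k c \<longleftrightarrow>
     (\<forall>v\<in>V. \<forall>a. c v = Some a \<longrightarrow> a < k) \<and>
     (\<forall>u\<in>V. \<forall>v\<in>V. E u v \<longrightarrow> c u = None \<or> c u \<noteq> c v)"

definition legal :: "'v set \<Rightarrow> ('v \<Rightarrow> 'v \<Rightarrow> bool) \<Rightarrow> nat \<Rightarrow> ('v \<Rightarrow> nat option) \<Rightarrow> 'v \<Rightarrow> nat \<Rightarrow> bool" where
  "legal V E k c v a \<longleftrightarrow> a < k \<and> (\<forall>u\<in>V. E v u \<longrightarrow> c u \<noteq> Some a)"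

definition stuck :: "'v set \<Rightarrow> ('v \<Rightarrow> 'v \<Rightarrow> bool) \<Rightarrow> nat \<Rightarrow> ('v \<Rightarrow> nat option) \<Rightarrow> bool" where
  "stuck V E k c \<longleftrightarrow> (\<exists>v\<in>V. c v = None \<and> (\<forall>a. \<not> legal V E k c v a))"

definition complete :: "'v set \<Rightarrow> ('v \<Rightarrow> nat option) \<Rightarrow> bool" where
  "complete V c \<longleftrightarrow> (\<forall>v\<in>V. c v \<noteq> None)"

definition move :: "'v set \<Rightarrow> ('v \<Rightarrow> 'v \<Rightarrow> bool) \<Rightarrow> nat \<Rightarrow> ('v \<Rightarrow> nat option) \<Rightarrow> 'v \<Rightarrow> nat \<Rightarrow> bool" where
  "move V E k c v a \<longleftrightarrow> v \<in> V \<and> c v = None \<and> legal V E k c v a"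

text \<open>cg_A: Alice, to move at position c, has a winning strategy;
cg_B: Bob to move at c, Alice has a winning strategy.\<close>

inductive cg_A and cg_B for V :: "'v set" and E :: "'v \<Rightarrow> 'v \<Rightarrow> bool" and k :: nat where
  cgA_done: "\<not> stuck V E k c \<Longrightarrow> complete V c \<Longrightarrow> cg_A V E k c"
| cgA_move: "\<not> stuck V E k c \<Longrightarrow> move V E k c v a \<Longrightarrow> cg_B V E k (c(v := Some a)) \<Longrightarrow> cg_A V E k c"
| cgB_done: "\<not> stuck V E k c \<Longrightarrow> complete V c \<Longrightarrow> cg_B V E k c"
| cgB_move: "\<not> stuck V E k c \<Longrightarrow> (\<forall>v a. move V E k c v a \<longrightarrow> cg_A V E k (c(v := Some a)))
             \<Longrightarrow> cg_B V E k c"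

definition alice_wins_cg :: "'v set \<Rightarrow> ('v \<Rightarrow> 'v \<Rightarrow> bool) \<Rightarrow> nat \<Rightarrow> ('v \<Rightarrow> nat option) \<Rightarrow> bool" where
  "alice_wins_cg V E k c \<longleftrightarrow> cg_A V E k c"

inductive mcg_A and mcg_B for V :: "'v set" and E :: "'v \<Rightarrow> 'v \<Rightarrow> bool" and k :: nat where
  mcgA_done: "\<not> stuck V E k c \<Longrightarrow> complete V c \<Longrightarrow> mcg_A V E k c"
| mcgA_move: "\<not> stuck V E k c \<Longrightarrow> move V E k c v a \<Longrightarrow> mcg_B V E k (c(v := Some a)) \<Longrightarrow> mcg_A V E k c"
| mcgB_done: "\<not> stuck V E k c \<Longrightarrow> complete V c \<Longrightarrow> mcg_B V E k c"
| mcgB_move: "\<not> stuck V E k c \<Longrightarrow> mcg_A V E k c \<comment> \<open>Bob passes\<close>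
             \<Longrightarrow> (\<forall>v a. move V E k c v a \<longrightarrow> mcg_A V E k (c(v := Some a)))
             \<Longrightarrow> mcg_B V E k c"

definition alice_wins_mcg :: "'v set \<Rightarrow> ('v \<Rightarrow> 'v \<Rightarrow> bool) \<Rightarrow> nat \<Rightarrow> ('v \<Rightarrow> nat option) \<Rightarrow> bool" where
  "alice_wins_mcg V E k c \<longleftrightarrow> mcg_B V E k c"

definition is_subgraph :: "'v set \<Rightarrow> ('v \<Rightarrow> 'v \<Rightarrow> bool) \<Rightarrow> 'v set \<Rightarrow> ('v \<times> 'v) set \<Rightarrow> bool" where
  "is_subgraph V E W D \<longleftrightarrow> W \<subseteq> V \<and> D \<subseteq> W \<times> W \<and> (\<forall>x y. (x, y) \<in> D \<longrightarrow> E x y) \<and> sym D"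

definition sg_connected :: "'v set \<Rightarrow> ('v \<times> 'v) set \<Rightarrow> bool" where
  "sg_connected W D \<longleftrightarrow> W \<noteq> {} \<and> (\<forall>x\<in>W. \<forall>y\<in>W. (x, y) \<in> D\<^sup>*)"

definition sg_degree :: "('v \<times> 'v) set \<Rightarrow> 'v \<Rightarrow> nat" where
  "sg_degree D x = card {y. (x, y) \<in> D}"

definition trunk_candidate :: "'v set \<Rightarrow> ('v \<Rightarrow> 'v \<Rightarrow> bool) \<Rightarrow> ('v \<Rightarrow> nat option) \<Rightarrow> 'v set \<Rightarrow> ('v \<times> 'v) set \<Rightarrow> bool" where
  "trunk_candidate V E c W D \<longleftrightarrow> is_subgraph V E W D \<and> sg_connected W D
     \<and> (\<forall>x\<in>W. c x \<noteq> None \<longrightarrow> sg_degree D x = 1)"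

definition is_trunk :: "'v set \<Rightarrow> ('v \<Rightarrow> 'v \<Rightarrow> bool) \<Rightarrow> ('v \<Rightarrow> nat option) \<Rightarrow> 'v set \<Rightarrow> ('v \<times> 'v) set \<Rightarrow> bool" where
  "is_trunk V E c W D \<longleftrightarrow> trunk_candidate V E c W D \<and>
     \<not> (\<exists>W' D'. trunk_candidate V E c W' D' \<and> W \<subseteq> W' \<and> D \<subseteq> D' \<and> (W, D) \<noteq> (W', D'))"

definition trunks :: "'v set \<Rightarrow> ('v \<Rightarrow> 'v \<Rightarrow> bool) \<Rightarrow> ('v \<Rightarrow> nat option) \<Rightarrow> ('v set \<times> ('v \<times> 'v) set) set" where
  "trunks V E c = {(W, D). is_trunk V E c W D}"

text \<open>R(F): disjoint union of all trunks; a vertex of R(F) is a pair (trunk, vertex of F in it).\<close>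

definition RV :: "'v set \<Rightarrow> ('v \<Rightarrow> 'v \<Rightarrow> bool) \<Rightarrow> ('v \<Rightarrow> nat option)
                  \<Rightarrow> (('v set \<times> ('v \<times> 'v) set) \<times> 'v) set" where
  "RV V E c = {(t, v). t \<in> trunks V E c \<and> v \<in> fst t}"

definition RE :: "'v set \<Rightarrow> ('v \<Rightarrow> 'v \<Rightarrow> bool) \<Rightarrow> ('v \<Rightarrow> nat option)
                  \<Rightarrow> (('v set \<times> ('v \<times> 'v) set) \<times> 'v) \<Rightarrow> (('v set \<times> ('v \<times> 'v) set) \<times> 'v) \<Rightarrow> bool" where
  "RE V E c p q \<longleftrightarrow> fst p \<in> trunks V E c \<and> fst p = fst q \<and> (snd p, snd q) \<in> snd (fst p)"

definition Rc :: "('v \<Rightarrow> nat option) \<Rightarrow> (('v set \<times> ('v \<times> 'v) set) \<times> 'v) \<Rightarrow> nat option" where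
  "Rc c p = c (snd p)"

end

theory Submission
  imports Defs "HOL-Library.Product_Order" "HOL-Library.Transitive_Closure_Table"
begin

text \<open>Every uncolored vertex v of the forest lies in exactly one trunk, and every edge of F at v
is an edge of that trunk: otherwise the trunk could be enlarged by the edge, or, if the other end
is a colored vertex already in the trunk, the edge would close a cycle. Colored vertices never
change. Hence a position of the coloring game on F and the corresponding position on R(F) have
the same uncolored vertices with the same legal colors, and Alice can copy her winning strategy
for the Modified Coloring Game on R(F) to F, reading each move of Bob on F as the same move on
R(F). Alice moving first on F is covered by letting Bob pass at the start of the Modified game.\<close>

lemma forest_edge_mem_if_rtrancl:
  assumes F: "forest V E" and DE: "\<And>x y. (x, y) \<in> D \<Longrightarrow> E x y"
    and path: "(w, u) \<in> D\<^sup>*" and wu: "E w u"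
  shows "(w, u) \<in> D"
proof -
  have "rtranclp (\<lambda>x y. (x, y) \<in> D) w u"
    using path by (simp add: rtranclp_rtrancl_eq)
  then obtain xs where "rtrancl_path (\<lambda>x y. (x, y) \<in> D) w xs u"
    by (auto simp: rtranclp_eq_rtrancl_path)
  then obtain ys where ys: "rtrancl_path (\<lambda>x y. (x, y) \<in> D) w ys u" "distinct (w # ys)"
    by (rule rtrancl_path_distinct)
  have step: "E ((w # ys) ! i) ((w # ys) ! Suc i)" if "Suc i < length (w # ys)" for i
    using rtrancl_path_nth[OF ys(1), of i] that DE by simp
  have "w \<noteq> u" using F wu by (auto simp: forest_def simple_graph_def)
  then obtain y ys' where ys_Cons: "ys = y # ys'"
    using ys(1) by (cases ys) (auto elim: rtrancl_path.cases)
  show ?thesis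
  proof (cases ys')
    case Nil
    then show ?thesis using ys(1) ys_Cons by (auto elim!: rtrancl_path.cases)
  next
    case (Cons z zs)
    have "last (w # ys) = u" using rtrancl_path_last[OF ys(1)] ys_Cons by simp
    moreover have "set (w # ys) \<subseteq> V"
    proof -
      have "E x z \<Longrightarrow> x \<in> V \<and> z \<in> V" for x z
        using F by (auto simp: forest_def simple_graph_def)
      then show ?thesis
        using wu rtrancl_path_Range[OF ys(1)] DE by fastforce
    qed
    moreover have "E u w" using F wu by (simp add: forest_def simple_graph_def)
    moreover have "length (w # ys) \<ge> 3" using ys_Cons Cons by simp
    ultimately have False
      using F ys(2) step unfolding forest_def by (metis list.sel(1))
    then show ?thesis ..
  qed
qed

lemma sg_degree_one_neighbour_unique:
  assumes "sg_degree D x = 1" "(x, y) \<in> D" "(x, z) \<in> D"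
  shows "y = z"
  using assms unfolding sg_degree_def by (metis card_1_singletonE mem_Collect_eq singletonD)

lemma is_trunkD:
  assumes "is_trunk V E c W D"
  shows "W \<subseteq> V" and "D \<subseteq> W \<times> W" and "\<And>x y. (x, y) \<in> D \<Longrightarrow> E x y" and "sym D"
    and "sg_connected W D" and "\<And>x. x \<in> W \<Longrightarrow> c x \<noteq> None \<Longrightarrow> sg_degree D x = 1"
  using assms unfolding is_trunk_def trunk_candidate_def is_subgraph_def by blast+

lemma is_trunk_maximal:
  assumes "is_trunk V E c W D" "trunk_candidate V E c W' D'" "W \<subseteq> W'" "D \<subseteq> D'"
  shows "W' = W" and "D' = D"
  using assms unfolding is_trunk_def by blast+

lemma trunk_candidate_singleton:
  assumes "v \<in> V" "c v = None"
  shows "trunk_candidate V E c {v} {}"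
  using assms unfolding trunk_candidate_def is_subgraph_def sg_connected_def
  by (auto simp: sym_def)

lemma trunk_candidate_add_edge:
  assumes G: "simple_graph V E" and t: "trunk_candidate V E c W D"
    and w: "w \<in> W" "c w = None" and wu: "E w u" and u: "u \<notin> W"
  shows "trunk_candidate V E c (insert u W) (D \<union> {(w, u), (u, w)})"
    (is "trunk_candidate V E c ?W ?D")
proof -
  have sub: "W \<subseteq> V" "D \<subseteq> W \<times> W" "\<And>x y. (x, y) \<in> D \<Longrightarrow> E x y" "sym D"
    and con: "sg_connected W D" and deg: "\<And>x. x \<in> W \<Longrightarrow> c x \<noteq> None \<Longrightarrow> sg_degree D x = 1"
    using t unfolding trunk_candidate_def is_subgraph_def by blast+
  have "u \<in> V" "E u w" using G wu unfolding simple_graph_def by blast+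
  then have "is_subgraph V E ?W ?D"
    using sub w wu unfolding is_subgraph_def by (auto simp: sym_def)
  moreover have "sg_connected ?W ?D"
    unfolding sg_connected_def
  proof (intro conjI ballI)
    fix x y assume "x \<in> ?W" "y \<in> ?W"
    have "D\<^sup>* \<subseteq> ?D\<^sup>*" by (rule rtrancl_mono) auto
    moreover have "(w, u) \<in> ?D\<^sup>*" "(u, w) \<in> ?D\<^sup>*" by auto
    ultimately show "(x, y) \<in> ?D\<^sup>*"
      using \<open>x \<in> ?W\<close> \<open>y \<in> ?W\<close> w con unfolding sg_connected_def
      by (blast intro: rtrancl_trans)
  qed simp
  moreover have "sg_degree ?D x = 1" if "x \<in> ?W" "c x \<noteq> None" for x
  proof (cases "x = u")
    case True
    then have "{y. (x, y) \<in> ?D} = {w}" using sub(2) u by auto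
    then show ?thesis by (simp add: sg_degree_def)
  next
    case False
    then have "{y. (x, y) \<in> ?D} = {y. (x, y) \<in> D}" using that w by auto
    then show ?thesis using deg that False by (simp add: sg_degree_def)
  qed
  ultimately show ?thesis unfolding trunk_candidate_def by blast
qed

lemma trunk_exists:
  assumes "finite V" "v \<in> V" "c v = None"
  obtains W D where "is_trunk V E c W D" "v \<in> W"
proof -
  let ?S = "{(W, D). trunk_candidate V E c W D}"
  have "?S \<subseteq> Pow V \<times> Pow (V \<times> V)"
    unfolding trunk_candidate_def is_subgraph_def by auto
  moreover have "finite (Pow V \<times> Pow (V \<times> V))"
    using assms(1) by (intro finite_cartesian_product) auto
  ultimately have fin: "finite ?S" by (rule finite_subset)
  have "trunk_candidate V E c {v} {}" using assms(2,3) by (rule trunk_candidate_singleton)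
  then have "({v}, {}) \<in> ?S" by simp
  from finite_has_maximal2[OF fin this] obtain m
    where "m \<in> ?S" "({v}, {}) \<le> m" "\<forall>t\<in>?S. m \<le> t \<longrightarrow> m = t"
    by blast
  moreover obtain W D where "m = (W, D)" by (cases m)
  ultimately have "trunk_candidate V E c W D" "v \<in> W"
    and "\<And>W' D'. trunk_candidate V E c W' D' \<Longrightarrow> W \<subseteq> W' \<Longrightarrow> D \<subseteq> D' \<Longrightarrow> (W, D) = (W', D')"
    by auto
  then have "is_trunk V E c W D" "v \<in> W" unfolding is_trunk_def by blast+
  then show thesis by (rule that)
qed

context
  fixes V :: "'v set" and E :: "'v \<Rightarrow> 'v \<Rightarrow> bool" and c :: "'v \<Rightarrow> nat option"
  assumes F: "forest V E"
begin

lemma trunk_edge_at_uncolored: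
  assumes t: "is_trunk V E c W D" and w: "w \<in> W" "c w = None" and wu: "E w u"
  shows "(w, u) \<in> D"
proof (cases "u \<in> W")
  case True
  then have "(w, u) \<in> D\<^sup>*" using is_trunkD(5)[OF t] w unfolding sg_connected_def by blast
  then show ?thesis using forest_edge_mem_if_rtrancl[OF F is_trunkD(3)[OF t]] wu by blast
next
  case False
  have "simple_graph V E" using F by (simp add: forest_def)
  moreover have "trunk_candidate V E c W D" using t by (simp add: is_trunk_def)
  ultimately have "trunk_candidate V E c (insert u W) (D \<union> {(w, u), (u, w)})"
    using w wu False by (rule trunk_candidate_add_edge)
  then have "insert u W = W" using is_trunk_maximal(1)[OF t] by blast
  then show ?thesis using False by blast
qed

lemma trunk_subset_if_common_uncolored:
  assumes t1: "is_trunk V E c W1 D1" and t2: "is_trunk V E c W2 D2"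
    and w: "w \<in> W1" "w \<in> W2" "c w = None"
  shows "W1 \<subseteq> W2 \<and> D1 \<subseteq> D2"
proof -
  \<comment> \<open>Walking along D1 from w: a colored vertex is a leaf of the trunk, so its only D1-edge is
    the one it was reached by.\<close>
  have invariant: "x \<in> W2 \<and> (\<forall>z. (x, z) \<in> D1 \<longrightarrow> (x, z) \<in> D2)" if "(w, x) \<in> D1\<^sup>*" for x
    using that
  proof (induction rule: rtrancl_induct)
    case base
    then show ?case using w trunk_edge_at_uncolored[OF t2] is_trunkD(3)[OF t1] by blast
  next
    case (step y z)
    then have "(y, z) \<in> D2" by blast
    then have z: "z \<in> W2" using is_trunkD(2)[OF t2] by auto
    have "(z, z') \<in> D2" if zz': "(z, z') \<in> D1" for z'
    proof (cases "c z = None")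
      case True
      then show ?thesis using trunk_edge_at_uncolored[OF t2 z] is_trunkD(3)[OF t1] zz' by blast
    next
      case False
      have "(z, y) \<in> D1" using step(2) is_trunkD(4)[OF t1] by (auto simp: sym_def)
      moreover have "z \<in> W1" using step(2) is_trunkD(2)[OF t1] by auto
      ultimately have "z' = y"
        using sg_degree_one_neighbour_unique is_trunkD(6)[OF t1] False zz' by metis
      then show ?thesis using \<open>(y, z) \<in> D2\<close> is_trunkD(4)[OF t2] by (auto simp: sym_def)
    qed
    then show ?case using z by blast
  qed
  have "(w, x) \<in> D1\<^sup>*" if "x \<in> W1" for x
    using that w is_trunkD(5)[OF t1] unfolding sg_connected_def by blast
  then show ?thesis using invariant is_trunkD(2)[OF t1] by blast
qed

lemma trunk_unique:
  assumes "is_trunk V E c W1 D1" "is_trunk V E c W2 D2" "w \<in> W1" "w \<in> W2" "c w = None"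
  shows "W1 = W2 \<and> D1 = D2"
proof -
  have "trunk_candidate V E c W2 D2" using assms(2) by (simp add: is_trunk_def)
  then show ?thesis
    using trunk_subset_if_common_uncolored[OF assms] is_trunk_maximal[OF assms(1)] by blast
qed

lemma RV_mem [simp]: "((W, D), v) \<in> RV V E c \<longleftrightarrow> is_trunk V E c W D \<and> v \<in> W"
  by (simp add: RV_def trunks_def)

lemma RV_exists_uncolored:
  assumes "v \<in> V" "c v = None"
  obtains W D where "((W, D), v) \<in> RV V E c"
proof -
  have "finite V" using F by (simp add: forest_def simple_graph_def)
  then show thesis using trunk_exists assms that by (metis RV_mem)
qed

text \<open>R(F) is built once from the initial coloring c; d and c' are later positions of the games
on F and on R(F).\<close>

definition RF_position ::
  "('v \<Rightarrow> nat option) \<Rightarrow> (('v set \<times> ('v \<times> 'v) set) \<times> 'v \<Rightarrow> nat option) \<Rightarrow> bool"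
  where "RF_position d c' \<longleftrightarrow>
    (\<forall>p\<in>RV V E c. c' p = d (snd p)) \<and> (\<forall>v\<in>V. c v \<noteq> None \<longrightarrow> d v = c v)"

lemma RF_positionD:
  assumes "RF_position d c'"
  shows "((W, D), v) \<in> RV V E c \<Longrightarrow> c' ((W, D), v) = d v"
    and "v \<in> V \<Longrightarrow> c v \<noteq> None \<Longrightarrow> d v = c v"
  using assms unfolding RF_position_def by (metis snd_conv)+

lemma RF_position_uncolored:
  assumes "RF_position d c'" "v \<in> V" "d v = None"
  shows "c v = None"
  using RF_positionD(2)[OF assms(1,2)] assms(3) by force

lemma RF_neighbours_uncolored:
  assumes p: "((W, D), v) \<in> RV V E c" and cv: "c v = None"
  shows "q \<in> RV V E c \<and> RE V E c ((W, D), v) q \<longleftrightarrow> (\<exists>u. q = ((W, D), u) \<and> E v u)"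
proof -
  have t: "is_trunk V E c W D" "v \<in> W" using p by simp_all
  have "(W, D) \<in> trunks V E c" using t by (simp add: trunks_def)
  moreover have "(v, u) \<in> D \<longleftrightarrow> E v u" for u
    using trunk_edge_at_uncolored[OF t cv] is_trunkD(3)[OF t(1)] by blast
  moreover have "(v, u) \<in> D \<Longrightarrow> u \<in> W" for u using is_trunkD(2)[OF t(1)] by auto
  ultimately show ?thesis using t by (cases q) (auto simp: RE_def)
qed

lemma move_iff_RF_move:
  assumes p: "((W, D), v) \<in> RV V E c" and pos: "RF_position d c'"
  shows "move (RV V E c) (RE V E c) k c' ((W, D), v) a \<longleftrightarrow> move V E k d v a"
proof -
  have v: "v \<in> V" using p is_trunkD(1)[of V E c W D] by auto
  have c'_v: "c' ((W, D), v) = d v" by (rule RF_positionD(1)[OF pos p])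
  show ?thesis
  proof (cases "c v = None")
    case True
    note nbrs = RF_neighbours_uncolored[OF p True]
    have "E v u \<Longrightarrow> u \<in> V" for u using F by (simp add: forest_def simple_graph_def)
    moreover have "c' ((W, D), u) = d u" if "E v u" for u
    proof -
      have "((W, D), u) \<in> RV V E c" using nbrs that by blast
      then show ?thesis by (rule RF_positionD(1)[OF pos])
    qed
    ultimately have "(\<forall>q\<in>RV V E c. RE V E c ((W, D), v) q \<longrightarrow> c' q \<noteq> Some a)
        \<longleftrightarrow> (\<forall>u\<in>V. E v u \<longrightarrow> d u \<noteq> Some a)"
      using nbrs by metis
    then show ?thesis using p v c'_v by (simp add: move_def legal_def)
  next
    case False
    then have "d v \<noteq> None" using RF_positionD(2)[OF pos v] by simp
    then show ?thesis using c'_v by (auto simp: move_def)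
  qed
qed

lemma complete_if_RF_complete:
  assumes pos: "RF_position d c'" and complete: "complete (RV V E c) c'"
  shows "complete V d"
  unfolding complete_def
proof
  fix v assume v: "v \<in> V"
  show "d v \<noteq> None"
  proof (cases "c v = None")
    case True
    then obtain W D where p: "((W, D), v) \<in> RV V E c" using RV_exists_uncolored v by blast
    then have "c' ((W, D), v) \<noteq> None" using complete unfolding complete_def by blast
    then show ?thesis using RF_positionD(1)[OF pos p] by simp
  next
    case False
    then show ?thesis using RF_positionD(2)[OF pos v] by simp
  qed
qed

lemma not_stuck_if_RF_not_stuck:
  assumes pos: "RF_position d c'" and ns: "\<not> stuck (RV V E c) (RE V E c) k c'"
  shows "\<not> stuck V E k d"
proof
  assume "stuck V E k d"
  then obtain v where v: "v \<in> V" "d v = None" and no_move: "\<And>a. \<not> move V E k d v a"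
    by (auto simp: stuck_def move_def)
  have "c v = None" using RF_position_uncolored[OF pos] v by blast
  then obtain W D where p: "((W, D), v) \<in> RV V E c" using RV_exists_uncolored v(1) by blast
  moreover have "c' ((W, D), v) = None" using RF_positionD(1)[OF pos p] v(2) by simp
  ultimately obtain a where "move (RV V E c) (RE V E c) k c' ((W, D), v) a"
    using ns unfolding stuck_def move_def by blast
  then show False using no_move move_iff_RF_move[OF p pos] by blast
qed

lemma RF_position_update:
  assumes p: "((W, D), v) \<in> RV V E c" and cv: "c v = None" and pos: "RF_position d c'"
  shows "RF_position (d(v := Some a)) (c'(((W, D), v) := Some a))"
  unfolding RF_position_def
proof (intro conjI ballI impI)
  fix q assume q: "q \<in> RV V E c"
  obtain W' D' u where q_eq: "q = ((W', D'), u)" by (cases q) auto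
  show "(c'(((W, D), v) := Some a)) q = (d(v := Some a)) (snd q)"
  proof (cases "u = v")
    case True
    have "is_trunk V E c W D" "v \<in> W" "is_trunk V E c W' D'" "v \<in> W'"
      using p q q_eq True by simp_all
    then have "W' = W \<and> D' = D" using trunk_unique cv by blast
    then show ?thesis using q_eq True by simp
  next
    case False
    then show ?thesis using RF_positionD(1)[OF pos] q q_eq by simp
  qed
next
  fix w assume w: "w \<in> V" "c w \<noteq> None"
  then have "w \<noteq> v" using cv by auto
  then show "(d(v := Some a)) w = c w" using RF_positionD(2)[OF pos w] by simp
qed

lemma cg_wins_if_RF_mcg_wins:
  shows "mcg_A (RV V E c) (RE V E c) k c' \<Longrightarrow> RF_position d c' \<Longrightarrow> cg_A V E k d"
    and "mcg_B (RV V E c) (RE V E c) k c' \<Longrightarrow> RF_position d c' \<Longrightarrow> cg_B V E k d"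
proof (induction arbitrary: d and d rule: mcg_A_mcg_B.inducts)
  case (mcgA_done c')
  then show ?case
    using not_stuck_if_RF_not_stuck complete_if_RF_complete by (blast intro: cgA_done)
next
  case (mcgA_move c' p a)
  note pos = \<open>RF_position d c'\<close>
  obtain W D v where p_eq: "p = ((W, D), v)" by (cases p) auto
  have p: "((W, D), v) \<in> RV V E c" and "c' ((W, D), v) = None"
    using \<open>move (RV V E c) (RE V E c) k c' p a\<close> p_eq by (auto simp: move_def)
  then have "d v = None" using RF_positionD(1)[OF pos p] by simp
  moreover have v: "v \<in> V" using p is_trunkD(1)[of V E c W D] by auto
  ultimately have cv: "c v = None" using RF_position_uncolored[OF pos] by blast
  have "move V E k d v a"
    using \<open>move (RV V E c) (RE V E c) k c' p a\<close> move_iff_RF_move[OF p pos] p_eq by simp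
  moreover have "cg_B V E k (d(v := Some a))"
    using mcgA_move.IH[unfolded p_eq] RF_position_update[OF p cv pos] by blast
  moreover have "\<not> stuck V E k d" using not_stuck_if_RF_not_stuck[OF pos mcgA_move(1)] .
  ultimately show ?case by (rule cgA_move[rotated])
next
  case (mcgB_done c')
  then show ?case
    using not_stuck_if_RF_not_stuck complete_if_RF_complete by (blast intro: cgB_done)
next
  case (mcgB_move c')
  note pos = \<open>RF_position d c'\<close>
  have "cg_A V E k (d(v := Some a))" if mv: "move V E k d v a" for v a
  proof -
    have v: "v \<in> V" "d v = None" using mv by (simp_all add: move_def)
    then have cv: "c v = None" by (rule RF_position_uncolored[OF pos])
    then obtain W D where p: "((W, D), v) \<in> RV V E c" using RV_exists_uncolored v(1) by blast
    have "move (RV V E c) (RE V E c) k c' ((W, D), v) a" using mv move_iff_RF_move[OF p pos] by simp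
    then show ?thesis using mcgB_move(4) RF_position_update[OF p cv pos] by blast
  qed
  moreover have "\<not> stuck V E k d" using not_stuck_if_RF_not_stuck[OF pos mcgB_move(1)] .
  ultimately show ?case by (blast intro: cgB_move)
qed

end

lemma mcg_B_imp_mcg_A: "mcg_B V E k c \<Longrightarrow> mcg_A V E k c"
  by (cases rule: mcg_B.cases) (auto intro: mcgA_done)

theorem lemma2p1:
  fixes V :: "'v set" and E :: "'v \<Rightarrow> 'v \<Rightarrow> bool" and c :: "'v \<Rightarrow> nat option" and k :: nat
  assumes "k \<ge> 1"
    and "forest V E"
    and "partial_coloring V E k c"
    and "alice_wins_mcg (RV V E c) (RE V E c) k (Rc c)"
  shows "alice_wins_cg V E k c"
proof -
  have "mcg_A (RV V E c) (RE V E c) k (Rc c)"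
    using assms(4) mcg_B_imp_mcg_A by (simp add: alice_wins_mcg_def)
  moreover have "RF_position V E c c (Rc c)"
    using assms(2) by (simp add: RF_position_def Rc_def)
  ultimately have "cg_A V E k c" by (rule cg_wins_if_RF_mcg_wins(1)[OF assms(2)])
  then show ?thesis by (simp add: alice_wins_cg_def)
qed

end
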